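(* Let $S$ be a semigroup with finite $\mathcal{R}$-height whose kernel is completely simple, and let $B$ be a bi-ideal of $S$. Then $\mathrm{H}_{\mathcal{R}}(B)\leq 3\,\mathrm{H}_{\mathcal{R}}(S)-2$.
   Context: For a semigroup $S$, $S^1$ denotes $S$ with an identity adjoined if necessary. Green's preorder: $a\leq_{\mathcal{R}} b$ iff $aS^1\subseteq bS^1$; $\mathcal{R}$ is the associated equivalence; the $\mathcal{R}$-height $\mathrm{H}_{\mathcal{R}}$ of a semigroup is the supremum of the cardinalities of chains in its poset of $\mathcal{R}$-classes. A bi-ideal is a non-empty subset $B$ with $BS^1B\subseteq B$; $\mathrm{H}_{\mathcal{R}}(B)$ is computed in $B$ itself. The kernel of $S$ is its unique minimal ideal; a semigroup is completely simple if it has no proper ideals and has both a minimal right ideal and a minimal left ideal. *)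

theory Defs
  imports Main "HOL-Library.Extended_Nat"
begin

text \<open>The ambient semigroup S is the type 'a of class semigroup_mult (S = UNIV).
  Notions relative to a subsemigroup T (given as a carrier set) are computed inside T.\<close>

definition R_le :: "'a::semigroup_mult set \<Rightarrow> 'a \<Rightarrow> 'a \<Rightarrow> bool" where
  "R_le T a b \<longleftrightarrow> a = b \<or> (\<exists>t\<in>T. a = b * t)"

definition R_equiv :: "'a::semigroup_mult set \<Rightarrow> 'a \<Rightarrow> 'a \<Rightarrow> bool" where
  "R_equiv T a b \<longleftrightarrow> R_le T a b \<and> R_le T b a"

definition R_classes :: "'a::semigroup_mult set \<Rightarrow> 'a set set" where
  "R_classes T = {{y\<in>T. R_equiv T x y} | x. x \<in> T}"

definition R_class_le :: "'a::semigroup_mult set \<Rightarrow> 'a set \<Rightarrow> 'a set \<Rightarrow> bool" where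
  "R_class_le T X Y \<longleftrightarrow> (\<exists>x\<in>X. \<exists>y\<in>Y. R_le T x y)"

text \<open>R-height: supremum of cardinalities of chains in the poset of R-classes
  (infinite chains contain finite chains of every size, so finite chains suffice).\<close>
definition R_height :: "'a::semigroup_mult set \<Rightarrow> enat" where
  "R_height T = Sup {enat (card C) | C. C \<subseteq> R_classes T \<and> finite C \<and>
      (\<forall>X\<in>C. \<forall>Y\<in>C. R_class_le T X Y \<or> R_class_le T Y X)}"

definition ideal_in :: "'a::semigroup_mult set \<Rightarrow> 'a set \<Rightarrow> bool" where
  "ideal_in T I \<longleftrightarrow> I \<noteq> {} \<and> I \<subseteq> T \<and> (\<forall>x\<in>I. \<forall>t\<in>T. x * t \<in> I \<and> t * x \<in> I)"

definition right_ideal_in :: "'a::semigroup_mult set \<Rightarrow> 'a set \<Rightarrow> bool" where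
  "right_ideal_in T I \<longleftrightarrow> I \<noteq> {} \<and> I \<subseteq> T \<and> (\<forall>x\<in>I. \<forall>t\<in>T. x * t \<in> I)"

definition left_ideal_in :: "'a::semigroup_mult set \<Rightarrow> 'a set \<Rightarrow> bool" where
  "left_ideal_in T I \<longleftrightarrow> I \<noteq> {} \<and> I \<subseteq> T \<and> (\<forall>x\<in>I. \<forall>t\<in>T. t * x \<in> I)"

definition completely_simple :: "'a::semigroup_mult set \<Rightarrow> bool" where
  "completely_simple T \<longleftrightarrow>
     (\<forall>I. ideal_in T I \<longrightarrow> I = T) \<and>
     (\<exists>R. right_ideal_in T R \<and> (\<forall>R'. right_ideal_in T R' \<and> R' \<subseteq> R \<longrightarrow> R' = R)) \<and>
     (\<exists>L. left_ideal_in T L \<and> (\<forall>L'. left_ideal_in T L' \<and> L' \<subseteq> L \<longrightarrow> L' = L))"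

definition is_kernel :: "'a::semigroup_mult set \<Rightarrow> bool" where
  "is_kernel K \<longleftrightarrow> ideal_in UNIV K \<and> (\<forall>I. ideal_in UNIV I \<longrightarrow> K \<subseteq> I)"

definition bi_ideal :: "'a::semigroup_mult set \<Rightarrow> bool" where
  "bi_ideal B \<longleftrightarrow> B \<noteq> {} \<and> (\<forall>b\<in>B. \<forall>b'\<in>B. b * b' \<in> B \<and> (\<forall>s. b * s * b' \<in> B))"

end

theory Submission
  imports Defs
begin

text \<open>
  Represent a chain of \<open>\<R>\<close>-classes of the bi-ideal \<open>B\<close> by pairwise \<open>\<R>\<^sub>B\<close>-inequivalent
  elements and send each of them to its \<open>\<R>\<close>-class in \<open>S\<close>; the images form a chain in \<open>S\<close>,
  so there are at most \<open>H = H\<^sub>\<R>(S)\<close> of them. A fibre has at most three elements: if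
  \<open>m\<^sub>0 < m\<^sub>1 \<le> m\<^sub>2 < m\<^sub>3\<close> in the \<open>\<R>\<^sub>B\<close>-order lie in one \<open>\<R>\<^sub>S\<close>-class, then \<open>m\<^sub>3 \<in> m\<^sub>0 S\<^sup>1\<close>,
  \<open>m\<^sub>0 \<in> m\<^sub>1 B\<close> and \<open>m\<^sub>2 \<in> m\<^sub>3 B\<close> give \<open>m\<^sub>2 \<in> m\<^sub>1 B S\<^sup>1 B \<subseteq> m\<^sub>1 B\<close>, so \<open>m\<^sub>1 \<R>\<^sub>B m\<^sub>2\<close>.
  This gives \<open>3H\<close>; the kernel \<open>K\<close> lowers it to \<open>3H - 2\<close>. If the least element of the chain lies
  in \<open>K\<close>, its fibre is a singleton, because complete simplicity makes every \<open>b \<in> B \<inter> K\<close>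
  regular with \<open>bK\<close> a minimal right ideal of \<open>K\<close>, whence \<open>b \<in> btB\<close> for all \<open>t\<close>. Otherwise
  multiplying it into \<open>K\<close> produces an extra \<open>\<R>\<^sub>S\<close>-class below the whole chain.
\<close>

text \<open>Stated for an arbitrary associative operation, so that the left-hand versions below are
  instances for the opposite multiplication.\<close>

locale simple_with_minimal_right_ideal = semigroup +
  fixes K R :: "'a set"
  assumes closed: "\<And>x y. x \<in> K \<Longrightarrow> y \<in> K \<Longrightarrow> x \<^bold>* y \<in> K"
    and simple: "\<And>I. I \<noteq> {} \<Longrightarrow> I \<subseteq> K \<Longrightarrow>
      (\<And>x t. x \<in> I \<Longrightarrow> t \<in> K \<Longrightarrow> x \<^bold>* t \<in> I \<and> t \<^bold>* x \<in> I) \<Longrightarrow> I = K"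
    and right_ideal: "R \<noteq> {}" "R \<subseteq> K" "\<And>x t. x \<in> R \<Longrightarrow> t \<in> K \<Longrightarrow> x \<^bold>* t \<in> R"
    and minimal: "\<And>R'. R' \<noteq> {} \<Longrightarrow> R' \<subseteq> R \<Longrightarrow>
      (\<And>x t. x \<in> R' \<Longrightarrow> t \<in> K \<Longrightarrow> x \<^bold>* t \<in> R') \<Longrightarrow> R' = R"
begin

lemma two_sided_ideal_generated_eq:
  assumes "a \<in> K"
  shows "{p \<^bold>* a \<^bold>* q | p q. p \<in> K \<and> q \<in> K} = K"
proof (rule simple)
  fix x t assume "x \<in> {p \<^bold>* a \<^bold>* q | p q. p \<in> K \<and> q \<in> K}" "t \<in> K"
  then obtain p q where "x = p \<^bold>* a \<^bold>* q" "p \<in> K" "q \<in> K" "t \<in> K" by blast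
  moreover have "x \<^bold>* t = p \<^bold>* a \<^bold>* (q \<^bold>* t)" "t \<^bold>* x = t \<^bold>* p \<^bold>* a \<^bold>* q"
    using \<open>x = p \<^bold>* a \<^bold>* q\<close> by (simp_all add: assoc)
  ultimately show "x \<^bold>* t \<in> {p \<^bold>* a \<^bold>* q | p q. p \<in> K \<and> q \<in> K} \<and>
      t \<^bold>* x \<in> {p \<^bold>* a \<^bold>* q | p q. p \<in> K \<and> q \<in> K}"
    using closed by blast
qed (use assms closed in blast)+

lemma mult_right_ideal_eq: "{k \<^bold>* r | k r. k \<in> K \<and> r \<in> R} = K"
proof (rule simple)
  fix x t assume "x \<in> {k \<^bold>* r | k r. k \<in> K \<and> r \<in> R}" "t \<in> K"
  then obtain k r where "x = k \<^bold>* r" "k \<in> K" "r \<in> R" "t \<in> K" by blast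
  moreover have "x \<^bold>* t = k \<^bold>* (r \<^bold>* t)" "t \<^bold>* x = t \<^bold>* k \<^bold>* r"
    using \<open>x = k \<^bold>* r\<close> by (simp_all add: assoc)
  ultimately show "x \<^bold>* t \<in> {k \<^bold>* r | k r. k \<in> K \<and> r \<in> R} \<and>
      t \<^bold>* x \<in> {k \<^bold>* r | k r. k \<in> K \<and> r \<in> R}"
    using closed right_ideal(3) by blast
qed (use closed right_ideal in blast)+

lemma principal_right_ideal_minimal:
  assumes a: "a \<in> K" and J: "J \<noteq> {}" "\<And>x t. x \<in> J \<Longrightarrow> t \<in> K \<Longrightarrow> x \<^bold>* t \<in> J"
    and J_sub: "J \<subseteq> (\<lambda>t. a \<^bold>* t) ` K"
  shows "(\<lambda>t. a \<^bold>* t) ` K \<subseteq> J"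
proof -
  obtain k r where kr: "k \<in> K" "r \<in> R" "a = k \<^bold>* r"
    using mult_right_ideal_eq a by blast
  have "{r' \<in> R. k \<^bold>* r' \<in> J} = R"
  proof (rule minimal)
    obtain t where "t \<in> K" "a \<^bold>* t \<in> J" using J(1) J_sub by blast
    then show "{r' \<in> R. k \<^bold>* r' \<in> J} \<noteq> {}"
      using kr right_ideal(3) by (auto simp: assoc)
  qed (auto simp: J(2) right_ideal(3) simp flip: assoc)
  then show ?thesis
    using kr right_ideal(3) by (auto simp: assoc)
qed

lemma mem_principal_right_ideal:
  assumes a: "a \<in> K"
  obtains z where "z \<in> K" "a = a \<^bold>* z"
proof -
  obtain p q where pq: "p \<in> K" "q \<in> K" "a = p \<^bold>* a \<^bold>* q"
    using two_sided_ideal_generated_eq[OF a] a by blast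
  have "(\<lambda>t. a \<^bold>* t) ` K \<subseteq> (\<lambda>t. a \<^bold>* q \<^bold>* t) ` K"
    by (rule principal_right_ideal_minimal)
      (use a pq closed in \<open>auto simp: assoc\<close>)
  with pq obtain z where "z \<in> K" "a \<^bold>* q = a \<^bold>* q \<^bold>* z" by blast
  then have "a = a \<^bold>* z"
    using pq by (metis assoc)
  with \<open>z \<in> K\<close> that show thesis by blast
qed

lemma mem_right_ideal_below:
  assumes "a \<in> K" "J \<noteq> {}" "\<And>x t. x \<in> J \<Longrightarrow> t \<in> K \<Longrightarrow> x \<^bold>* t \<in> J"
    and "J \<subseteq> (\<lambda>t. a \<^bold>* t) ` K"
  shows "a \<in> J"
  using principal_right_ideal_minimal[OF assms] mem_principal_right_ideal[OF assms(1)] by blast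

end

lemma completely_simple_ideal_eq:
  assumes "completely_simple K" "I \<noteq> {}" "I \<subseteq> K"
    "\<And>x t. x \<in> I \<Longrightarrow> t \<in> K \<Longrightarrow> x * t \<in> I \<and> t * x \<in> I"
  shows "I = K"
proof -
  have "ideal_in K I"
    using assms(2-4) unfolding ideal_in_def by blast
  then show ?thesis
    using assms(1) unfolding completely_simple_def by blast
qed

lemma completely_simple_minimal_right_ideal:
  assumes "completely_simple K"
  obtains R where "right_ideal_in K R" "\<And>R'. right_ideal_in K R' \<Longrightarrow> R' \<subseteq> R \<Longrightarrow> R' = R"
  using assms unfolding completely_simple_def by (elim conjE exE) (simp add: that)

lemma completely_simple_minimal_left_ideal:
  assumes "completely_simple K"
  obtains L where "left_ideal_in K L" "\<And>L'. left_ideal_in K L' \<Longrightarrow> L' \<subseteq> L \<Longrightarrow> L' = L"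
  using assms unfolding completely_simple_def by (elim conjE exE) (simp add: that)

lemma completely_simple_mem_right_ideal_below:
  fixes K :: "'a::semigroup_mult set"
  assumes cs: "completely_simple K" and closed: "\<And>x y. x \<in> K \<Longrightarrow> y \<in> K \<Longrightarrow> x * y \<in> K"
    and a: "a \<in> K" and J: "right_ideal_in K J" "J \<subseteq> (\<lambda>t. a * t) ` K"
  shows "a \<in> J"
proof -
  obtain R where R: "right_ideal_in K R" "\<And>R'. right_ideal_in K R' \<Longrightarrow> R' \<subseteq> R \<Longrightarrow> R' = R"
    using completely_simple_minimal_right_ideal[OF cs] by blast
  interpret simple_with_minimal_right_ideal "(*)" K R
  proof
    show "I = K" if "I \<noteq> {}" "I \<subseteq> K" "\<And>x t. x \<in> I \<Longrightarrow> t \<in> K \<Longrightarrow> x * t \<in> I \<and> t * x \<in> I" for I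
      by (rule completely_simple_ideal_eq[OF cs]) (use that in blast)+
    show "R' = R" if "R' \<noteq> {}" "R' \<subseteq> R" "\<And>x t. x \<in> R' \<Longrightarrow> t \<in> K \<Longrightarrow> x * t \<in> R'" for R'
      using R(1) that by (intro R(2)) (auto simp: right_ideal_in_def)
  qed (use closed R(1) in \<open>auto simp: right_ideal_in_def\<close>)
  show ?thesis
    using J unfolding right_ideal_in_def by (intro mem_right_ideal_below[OF a]) auto
qed

lemma completely_simple_mem_left_ideal_below:
  fixes K :: "'a::semigroup_mult set"
  assumes cs: "completely_simple K" and closed: "\<And>x y. x \<in> K \<Longrightarrow> y \<in> K \<Longrightarrow> x * y \<in> K"
    and a: "a \<in> K" and J: "left_ideal_in K J" "J \<subseteq> (\<lambda>t. t * a) ` K"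
  shows "a \<in> J"
proof -
  obtain L where L: "left_ideal_in K L" "\<And>L'. left_ideal_in K L' \<Longrightarrow> L' \<subseteq> L \<Longrightarrow> L' = L"
    using completely_simple_minimal_left_ideal[OF cs] by blast
  interpret simple_with_minimal_right_ideal "\<lambda>x y. y * x" K L
  proof
    show "I = K" if "I \<noteq> {}" "I \<subseteq> K" "\<And>x t. x \<in> I \<Longrightarrow> t \<in> K \<Longrightarrow> t * x \<in> I \<and> x * t \<in> I" for I
      by (rule completely_simple_ideal_eq[OF cs]) (use that in blast)+
    show "L' = L" if "L' \<noteq> {}" "L' \<subseteq> L" "\<And>x t. x \<in> L' \<Longrightarrow> t \<in> K \<Longrightarrow> t * x \<in> L'" for L'
      using L(1) that by (intro L(2)) (auto simp: left_ideal_in_def)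
  qed (use closed L(1) in \<open>auto simp: left_ideal_in_def mult.assoc\<close>)
  show ?thesis
    using J unfolding left_ideal_in_def by (intro mem_right_ideal_below[OF a]) auto
qed

lemma completely_simple_regular:
  fixes K :: "'a::semigroup_mult set"
  assumes cs: "completely_simple K" and closed: "\<And>x y. x \<in> K \<Longrightarrow> y \<in> K \<Longrightarrow> x * y \<in> K"
    and a: "a \<in> K"
  obtains y where "y \<in> K" "a = a * y * a"
proof -
  have "a \<in> (\<lambda>x. a * a * x) ` K"
    using a closed
    by (intro completely_simple_mem_right_ideal_below[OF cs closed a])
      (auto simp: right_ideal_in_def mult.assoc)
  then obtain x where x: "x \<in> K" "a = a * a * x" by blast
  have "a \<in> (\<lambda>y. y * a * a) ` K"
    using a closed
    by (intro completely_simple_mem_left_ideal_below[OF cs closed a])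
      (auto simp: left_ideal_in_def simp flip: mult.assoc)
  then obtain y where y: "y \<in> K" "a = y * a * a" by blast
  have "a * y * a = a * (y * a * a) * x"
    using x by (metis mult.assoc)
  also have "\<dots> = a"
    using x y by simp
  finally show thesis
    using that y(1) by simp
qed

lemma R_le_refl: "R_le T x x"
  unfolding R_le_def by simp

lemma R_le_trans:
  assumes closed: "\<And>x y. x \<in> T \<Longrightarrow> y \<in> T \<Longrightarrow> x * y \<in> T"
    and "R_le T x y" "R_le T y z"
  shows "R_le T x z"
  using assms unfolding R_le_def by (metis mult.assoc)

lemma R_le_UNIV_trans: "R_le UNIV x y \<Longrightarrow> R_le UNIV y z \<Longrightarrow> R_le UNIV x z"
  by (rule R_le_trans) simp_all

lemma R_le_mono: "R_le B x y \<Longrightarrow> B \<subseteq> T \<Longrightarrow> R_le T x y"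
  unfolding R_le_def by blast

lemma ideal_R_le_mem:
  assumes "ideal_in UNIV K" "R_le UNIV x y" "y \<in> K"
  shows "x \<in> K"
  using assms unfolding ideal_in_def R_le_def by blast

lemma bi_ideal_mult_closed: "bi_ideal B \<Longrightarrow> x \<in> B \<Longrightarrow> y \<in> B \<Longrightarrow> x * y \<in> B"
  unfolding bi_ideal_def by blast

lemma bi_ideal_sandwich: "bi_ideal B \<Longrightarrow> x \<in> B \<Longrightarrow> y \<in> B \<Longrightarrow> x * s * y \<in> B"
  unfolding bi_ideal_def by blast

lemma kernel_R_le_bi_ideal_mult:
  fixes K :: "'a::semigroup_mult set"
  assumes K: "ideal_in UNIV K" "completely_simple K" and B: "bi_ideal B" "b \<in> B" and b: "b \<in> K"
  shows "R_le B b (b * t)"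
proof -
  have mult_K: "x * s \<in> K" "s * x \<in> K" if "x \<in> K" for x s
    using K(1) that unfolding ideal_in_def by blast+
  then have closed: "\<And>x y. x \<in> K \<Longrightarrow> y \<in> K \<Longrightarrow> x * y \<in> K" by blast
  have "right_ideal_in K ((\<lambda>w. b * t * b * w) ` K)"
    using b mult_K unfolding right_ideal_in_def by (auto simp: mult.assoc)
  moreover have "(\<lambda>w. b * t * b * w) ` K \<subseteq> (\<lambda>s. b * s) ` K"
    using b mult_K by (auto simp: mult.assoc)
  ultimately have "b \<in> (\<lambda>w. b * t * b * w) ` K"
    using completely_simple_mem_right_ideal_below[OF K(2) closed b] by blast
  then obtain w where "w \<in> K" "b = b * t * b * w" by blast
  moreover obtain y where "y \<in> K" "b = b * y * b"
    using completely_simple_regular[OF K(2) closed b] .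
  ultimately have "b = b * t * (b * (w * y) * b)"
    by (metis mult.assoc)
  then show ?thesis
    unfolding R_le_def using bi_ideal_sandwich[OF B B(2)] by blast
qed

lemma R_equiv_bi_ideal_if_kernel:
  assumes "ideal_in UNIV K" "completely_simple K" "bi_ideal B" "x \<in> B"
    and "l \<in> K" "R_le UNIV x l" "R_le B l x"
  shows "R_equiv B x l"
proof -
  have "x \<in> K"
    using ideal_R_le_mem[OF assms(1,6,5)] .
  with assms have "R_le B x (x * t)" for t
    using kernel_R_le_bi_ideal_mult by blast
  with \<open>R_le B l x\<close> have "R_le B x l"
    unfolding R_le_def by blast
  with \<open>R_le B l x\<close> show ?thesis
    unfolding R_equiv_def by blast
qed

lemma R_le_bi_ideal_of_R_le:
  assumes "bi_ideal B" "t \<in> B" "t' \<in> B" "R_le UNIV u (x * t)"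
  shows "R_le B (u * t') x"
proof -
  from \<open>R_le UNIV u (x * t)\<close> consider "u = x * t" | s where "u = x * t * s"
    unfolding R_le_def by blast
  then show ?thesis
  proof cases
    case 1
    then show ?thesis
      using bi_ideal_mult_closed[OF assms(1-3)] unfolding R_le_def by (metis mult.assoc)
  next
    case 2
    then show ?thesis
      using bi_ideal_sandwich[OF assms(1-3)] unfolding R_le_def by (metis mult.assoc)
  qed
qed

definition R_chain :: "'a::semigroup_mult set \<Rightarrow> 'a set \<Rightarrow> bool" where
  "R_chain T E \<longleftrightarrow> E \<subseteq> T \<and> (\<forall>x\<in>E. \<forall>y\<in>E. R_le T x y \<or> R_le T y x)
     \<and> (\<forall>x\<in>E. \<forall>y\<in>E. R_equiv T x y \<longrightarrow> x = y)"

lemma R_chain_subset: "R_chain T E \<Longrightarrow> F \<subseteq> E \<Longrightarrow> R_chain T F"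
  unfolding R_chain_def by blast

lemma R_chain_least_greatest:
  assumes closed: "\<And>x y. x \<in> T \<Longrightarrow> y \<in> T \<Longrightarrow> x * y \<in> T"
    and "R_chain T E" "finite E" "E \<noteq> {}"
  obtains l g where "l \<in> E" "g \<in> E" "\<forall>x\<in>E. R_le T l x \<and> R_le T x g"
proof -
  have "transp_on E (R_le T)" "totalp_on E (R_le T)"
    using assms(2) R_le_trans[OF closed] unfolding R_chain_def transp_on_def totalp_on_def
    by blast+
  then obtain l g where "l \<in> E" "g \<in> E" "\<forall>x\<in>E. x \<noteq> l \<longrightarrow> R_le T l x" "\<forall>x\<in>E. x \<noteq> g \<longrightarrow> R_le T x g"
    using Finite_Set.bex_least_element Finite_Set.bex_greatest_element assms(3,4) by metis
  then show thesis
    using that R_le_refl by metis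
qed

lemma card_R_chain_le_3:
  assumes B: "bi_ideal B" and F: "R_chain B F" "finite F"
    and same_class: "\<And>x y. x \<in> F \<Longrightarrow> y \<in> F \<Longrightarrow> R_le UNIV x y"
  shows "card F \<le> 3"
proof (cases "F = {}")
  case False
  obtain l g where lg: "l \<in> F" "g \<in> F" "\<forall>x\<in>F. R_le B l x \<and> R_le B x g"
    by (rule R_chain_least_greatest[OF bi_ideal_mult_closed[OF B] F False])
  have "R_le B y x" if x: "x \<in> F - {l, g}" and y: "y \<in> F - {l, g}" for x y
  proof -
    obtain t where t: "t \<in> B" "l = x * t"
      using lg(3) x unfolding R_le_def by blast
    obtain t' where t': "t' \<in> B" "y = g * t'"
      using lg(3) y unfolding R_le_def by blast
    have "R_le UNIV g (x * t)"
      using same_class lg(1,2) t(2) by metis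
    then show ?thesis
      using R_le_bi_ideal_of_R_le[OF B t(1) t'(1)] t'(2) by simp
  qed
  then have "card (F - {l, g}) \<le> 1"
    using F unfolding R_chain_def R_equiv_def by (auto simp: card_le_Suc0_iff_eq)
  moreover have "F = (F - {l, g}) \<union> {l, g}"
    using lg(1,2) by blast
  then have "card F \<le> card (F - {l, g}) + card {l, g}"
    by (metis card_Un_le)
  moreover have "card {l, g} \<le> 2"
    by (simp add: card_insert_if)
  ultimately show ?thesis
    by linarith
qed simp

lemma card_le_mult_card_image:
  assumes "finite A" "\<And>y. y \<in> f ` A \<Longrightarrow> card {x \<in> A. f x = y} \<le> k"
  shows "card A \<le> k * card (f ` A)"
proof -
  have "card A = card (\<Union>y\<in>f ` A. {x \<in> A. f x = y})"
    by (rule arg_cong[where f = card]) blast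
  also have "\<dots> \<le> (\<Sum>y\<in>f ` A. card {x \<in> A. f x = y})"
    using assms(1) by (intro card_UN_le) simp
  also have "\<dots> \<le> card (f ` A) * k"
    using sum_bounded_above[of "f ` A" "\<lambda>y. card {x \<in> A. f x = y}" k] assms(2) by simp
  finally show ?thesis
    by (simp add: mult.commute)
qed

definition R_class :: "'a::semigroup_mult set \<Rightarrow> 'a \<Rightarrow> 'a set" where
  "R_class T x = {y \<in> T. R_equiv T x y}"

lemma R_class_eq_iff:
  assumes closed: "\<And>x y. x \<in> T \<Longrightarrow> y \<in> T \<Longrightarrow> x * y \<in> T" and "x \<in> T" "y \<in> T"
  shows "R_class T x = R_class T y \<longleftrightarrow> R_equiv T x y"
proof
  have "y \<in> R_class T y"
    using assms(3) R_le_refl unfolding R_class_def R_equiv_def by blast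
  then show "R_class T x = R_class T y \<Longrightarrow> R_equiv T x y"
    unfolding R_class_def by blast
  show "R_equiv T x y \<Longrightarrow> R_class T x = R_class T y"
    unfolding R_class_def R_equiv_def by (blast intro: R_le_trans[OF closed])
qed

lemma R_class_UNIV_eq_iff: "R_class UNIV x = R_class UNIV y \<longleftrightarrow> R_equiv UNIV x y"
  by (rule R_class_eq_iff) simp_all

lemma card_R_class_image_le_R_height:
  assumes "finite E" "E \<subseteq> T" "\<forall>x\<in>E. \<forall>y\<in>E. R_le T x y \<or> R_le T y x"
  shows "enat (card (R_class T ` E)) \<le> R_height T"
  unfolding R_height_def
proof (rule Sup_upper, intro CollectI exI conjI)
  show "R_class T ` E \<subseteq> R_classes T"
    using assms(2) unfolding R_classes_def R_class_def by blast
  have "x \<in> R_class T x" if "x \<in> E" for x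
    using assms(2) that R_le_refl unfolding R_class_def R_equiv_def by blast
  then show "\<forall>X\<in>R_class T ` E. \<forall>Y\<in>R_class T ` E. R_class_le T X Y \<or> R_class_le T Y X"
    using assms(3) unfolding R_class_le_def by blast
qed (use assms(1) in simp_all)

lemma R_chain_of_R_class_chain:
  assumes closed: "\<And>x y. x \<in> T \<Longrightarrow> y \<in> T \<Longrightarrow> x * y \<in> T"
    and C: "C \<subseteq> R_classes T" "finite C" "\<forall>X\<in>C. \<forall>Y\<in>C. R_class_le T X Y \<or> R_class_le T Y X"
  obtains E where "R_chain T E" "finite E" "card E = card C"
proof -
  have "\<forall>X\<in>C. \<exists>x. x \<in> T \<and> X = R_class T x"
    using C(1) unfolding R_classes_def R_class_def by blast
  then obtain rep where rep: "\<And>X. X \<in> C \<Longrightarrow> rep X \<in> T \<and> X = R_class T (rep X)"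
    by (metis bchoice)
  have rep_le: "R_le T (rep X) (rep Y)" if X: "X \<in> C" and Y: "Y \<in> C" and XY: "R_class_le T X Y" for X Y
  proof -
    obtain x y where xy: "x \<in> X" "y \<in> Y" "R_le T x y"
      using XY unfolding R_class_le_def by blast
    have "R_le T (rep X) x" "R_le T y (rep Y)"
      using rep[OF X] rep[OF Y] xy(1,2) unfolding R_class_def R_equiv_def by blast+
    then show ?thesis
      using xy(3) R_le_trans[OF closed] by blast
  qed
  have inj: "inj_on rep C"
    by (rule inj_onI) (metis rep)
  have "R_chain T (rep ` C)"
    unfolding R_chain_def
  proof (intro conjI ballI impI)
    show "rep ` C \<subseteq> T"
      using rep by blast
    show "R_le T x y \<or> R_le T y x" if "x \<in> rep ` C" "y \<in> rep ` C" for x y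
      using that C(3) rep_le by blast
    show "x = y" if x: "x \<in> rep ` C" and y: "y \<in> rep ` C" and xy: "R_equiv T x y" for x y
    proof -
      obtain X Y where "X \<in> C" "Y \<in> C" "x = rep X" "y = rep Y"
        using x y by blast
      then show ?thesis
        using xy rep R_class_eq_iff[OF closed] by metis
    qed
  qed
  then show thesis
    using that C(2) card_image[OF inj] by blast
qed

lemma card_R_chain_le_3_mult_card_R_classes:
  assumes B: "bi_ideal B" and E: "R_chain B E" "finite E"
  shows "card E \<le> 3 * card (R_class UNIV ` E)"
proof (rule card_le_mult_card_image[OF E(2)])
  fix Q
  show "card {x \<in> E. R_class UNIV x = Q} \<le> 3"
  proof (rule card_R_chain_le_3[OF B])
    show "R_chain B {x \<in> E. R_class UNIV x = Q}"
      by (rule R_chain_subset[OF E(1)]) blast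
    show "finite {x \<in> E. R_class UNIV x = Q}"
      using E(2) by simp
    show "R_le UNIV x y" if "x \<in> {x \<in> E. R_class UNIV x = Q}" "y \<in> {x \<in> E. R_class UNIV x = Q}" for x y
      using that R_class_UNIV_eq_iff[of x y] unfolding R_equiv_def by simp
  qed
qed

lemma card_R_chain_le_if_least_in_kernel:
  fixes B K :: "'a::semigroup_mult set"
  assumes K: "ideal_in UNIV K" "completely_simple K" and B: "bi_ideal B"
    and E: "R_chain B E" "finite E" and l: "l \<in> E" "\<forall>x\<in>E. R_le B l x" "l \<in> K"
  shows "card E + 2 \<le> 3 * card (R_class UNIV ` E)"
proof -
  let ?cls = "R_class (UNIV :: 'a set)"
  have "?cls x \<noteq> ?cls l" if x: "x \<in> E - {l}" for x
  proof
    assume "?cls x = ?cls l"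
    then have "R_le UNIV x l"
      using R_class_UNIV_eq_iff[of x l] unfolding R_equiv_def by simp
    moreover have "x \<in> B"
      using E(1) x unfolding R_chain_def by blast
    ultimately have "R_equiv B x l"
      using R_equiv_bi_ideal_if_kernel[OF K B] x l by blast
    then show False
      using E(1) x l(1) unfolding R_chain_def by blast
  qed
  then have "?cls ` (E - {l}) \<subseteq> ?cls ` E - {?cls l}"
    by blast
  then have "card (?cls ` (E - {l})) \<le> card (?cls ` E - {?cls l})"
    using E(2) by (intro card_mono) simp_all
  also have "\<dots> = card (?cls ` E) - 1"
    using l(1) by (simp add: card_Diff_singleton)
  finally have "card (?cls ` (E - {l})) + 1 \<le> card (?cls ` E)"
    using E(2) l(1) card_gt_0_iff[of "?cls ` E"] by fastforce
  moreover have "card (E - {l}) \<le> 3 * card (?cls ` (E - {l}))"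
    by (rule card_R_chain_le_3_mult_card_R_classes[OF B R_chain_subset[OF E(1)]]) (use E(2) in auto)
  moreover have "card E = card (E - {l}) + 1"
    using card_Suc_Diff1[OF E(2) l(1)] by simp
  ultimately show ?thesis
    by linarith
qed

lemma card_R_class_image_lt_R_height:
  fixes E K :: "'a::semigroup_mult set"
  assumes K: "ideal_in UNIV K" and E: "finite E" "\<forall>x\<in>E. \<forall>y\<in>E. R_le UNIV x y \<or> R_le UNIV y x"
    and l: "\<forall>x\<in>E. R_le UNIV l x" "l \<notin> K"
  shows "enat (card (R_class UNIV ` E) + 1) \<le> R_height (UNIV :: 'a set)"
proof -
  let ?cls = "R_class (UNIV :: 'a set)"
  obtain k where "k \<in> K"
    using K unfolding ideal_in_def by blast
  then have lk_K: "l * k \<in> K"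
    using K unfolding ideal_in_def by blast
  have "R_le UNIV (l * k) l"
    unfolding R_le_def by blast
  then have lk_le: "\<forall>x\<in>E. R_le UNIV (l * k) x"
    using l(1) R_le_UNIV_trans by blast
  have "?cls (l * k) \<notin> ?cls ` E"
  proof
    assume "?cls (l * k) \<in> ?cls ` E"
    then obtain x where x: "x \<in> E" "?cls (l * k) = ?cls x"
      by blast
    then have "R_le UNIV x (l * k)"
      using R_class_UNIV_eq_iff unfolding R_equiv_def by blast
    then have "x \<in> K"
      using ideal_R_le_mem[OF K _ lk_K] by blast
    then show False
      using ideal_R_le_mem[OF K _ \<open>x \<in> K\<close>] l x(1) by blast
  qed
  moreover have "enat (card (?cls ` insert (l * k) E)) \<le> R_height (UNIV :: 'a set)"
    using card_R_class_image_le_R_height[of "insert (l * k) E" UNIV] E lk_le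
    by (auto simp: R_le_refl)
  ultimately show ?thesis
    using E(1) by simp
qed

lemma card_R_chain_bi_ideal_le:
  fixes B K :: "'a::semigroup_mult set"
  assumes H: "R_height (UNIV :: 'a set) = enat H"
    and K: "ideal_in UNIV K" "completely_simple K" and B: "bi_ideal B"
    and E: "R_chain B E" "finite E"
  shows "card E \<le> 3 * H - 2"
proof (cases "E = {}")
  case False
  obtain l where l: "l \<in> E" "\<forall>x\<in>E. R_le B l x"
    by (metis R_chain_least_greatest[OF bi_ideal_mult_closed[OF B] E False])
  let ?cls = "R_class (UNIV :: 'a set)"
  have l_le: "\<forall>x\<in>E. R_le UNIV l x"
    using l(2) R_le_mono by blast
  have total: "\<forall>x\<in>E. \<forall>y\<in>E. R_le UNIV x y \<or> R_le UNIV y x"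
    using E(1) R_le_mono unfolding R_chain_def by blast
  have "card (?cls ` E) \<le> H"
    using card_R_class_image_le_R_height[OF E(2) _ total] H by simp
  show ?thesis
  proof (cases "l \<in> K")
    case True
    then have "card E + 2 \<le> 3 * card (?cls ` E)"
      using card_R_chain_le_if_least_in_kernel[OF K B E l] by blast
    with \<open>card (?cls ` E) \<le> H\<close> show ?thesis
      by linarith
  next
    case False
    then have "card (?cls ` E) + 1 \<le> H"
      using card_R_class_image_lt_R_height[OF K(1) E(2) total l_le] H by simp
    moreover have "card E \<le> 3 * card (?cls ` E)"
      using card_R_chain_le_3_mult_card_R_classes[OF B E] .
    ultimately show ?thesis
      by linarith
  qed
qed simp

theorem corollary3p4:
  fixes B :: "'a::semigroup_mult set"
  assumes "R_height (UNIV :: 'a set) \<noteq> \<infinity>"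
    and "\<exists>K :: 'a set. is_kernel K \<and> completely_simple K"
    and "bi_ideal B"
  shows "R_height B \<le> 3 * R_height (UNIV :: 'a set) - 2"
proof -
  obtain H where H: "R_height (UNIV :: 'a set) = enat H"
    using assms(1) by (cases "R_height (UNIV :: 'a set)") auto
  obtain K :: "'a set" where K: "ideal_in UNIV K" "completely_simple K"
    using assms(2) unfolding is_kernel_def by blast
  have "card C \<le> 3 * H - 2" if C: "C \<subseteq> R_classes B" "finite C"
    "\<forall>X\<in>C. \<forall>Y\<in>C. R_class_le B X Y \<or> R_class_le B Y X" for C
  proof -
    obtain E where "R_chain B E" "finite E" "card E = card C"
      by (rule R_chain_of_R_class_chain[OF bi_ideal_mult_closed[OF assms(3)] C])
    then show ?thesis
      using card_R_chain_bi_ideal_le[OF H K assms(3)] by metis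
  qed
  then have "R_height B \<le> enat (3 * H - 2)"
    unfolding R_height_def by (auto intro!: Sup_least)
  moreover have "3 * R_height (UNIV :: 'a set) - 2 = enat (3 * H - 2)"
    using H by (simp add: numeral_eq_enat)
  ultimately show ?thesis
    by simp
qed

end
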